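(* Let $S(t,p,q,x,y,u,v)=\sum_{\pi}t^{|\pi|}p^{\mathrm{asc}(\pi)}q^{\mathrm{des}(\pi)}x^{\mathrm{lmax}(\pi)}y^{\mathrm{rmax}(\pi)}u^{\mathrm{lmin}(\pi)}v^{\mathrm{rmin}(\pi)}$ over all separable permutations and $I(t,p,q,x,y,u,v)$ the same sum over irreducible separable permutations. Then $$S(t,p,q,x,y,u,v)-I(t,p,q,x,y,u,v)=p\,I(t,p,q,x,1,u,v)\,S(t,p,q,x,y,1,v)=p\,I(t,p,q,x,y,1,v)\,S(t,p,q,x,1,u,v).$$
   Context: A permutation of length $n$ is a word $\pi=\pi_1\cdots\pi_n$ containing each element of $[n]$ exactly once; $|\pi|=n$. For $\pi$ of length $m$, $\sigma$ of length $n$: $\pi\oplus\sigma=\pi_1\cdots\pi_m(\sigma_1+m)\cdots(\sigma_n+m)$, $\pi\ominus\sigma=(\pi_1+n)\cdots(\pi_m+n)\sigma_1\cdots\sigma_n$. Separable permutations are those of length $\ge1$ obtained from $1$ by repeatedly applying $\oplus,\ominus$ (equivalently, avoiding $2413$ and $3142$). The permutation $1$ is irreducible; a permutation of length $n\ge2$ is irreducible if there is no $i$, $2\le i\le n$, such that every element of $\pi_1\cdots\pi_{i-1}$ is less than every element of $\pi_i\cdots\pi_n$. $\mathrm{asc}(\pi)=\#\{i<n:\pi_i<\pi_{i+1}\}$, $\mathrm{des}(\pi)=\#\{i<n:\pi_i>\pi_{i+1}\}$; $\pi_i$ is a left-to-right maximum (minimum) if $\pi_i>\pi_j$ ($\pi_i<\pi_j$)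 for all $j<i$, a right-to-left maximum (minimum) if $\pi_i>\pi_j$ ($\pi_i<\pi_j$) for all $j>i$; $\mathrm{lmax},\mathrm{lmin},\mathrm{rmax},\mathrm{rmin}$ count these. (The paper writes $I(t,p,q,x,u,v)$ etc., omitting arguments equal to $1$.) *)

theory Defs
  imports "HOL-Computational_Algebra.Formal_Power_Series"
begin

text \<open>Permutations are lists of naturals; a permutation of length n is a list
containing each element of {1..n} exactly once.\<close>

definition oplus :: "nat list \<Rightarrow> nat list \<Rightarrow> nat list" where
  "oplus \<pi> \<sigma> = \<pi> @ map (\<lambda>s. s + length \<pi>) \<sigma>"

definition ominus :: "nat list \<Rightarrow> nat list \<Rightarrow> nat list" where
  "ominus \<pi> \<sigma> = map (\<lambda>s. s + length \<sigma>) \<pi> @ \<sigma>"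

inductive separable :: "nat list \<Rightarrow> bool" where
  one: "separable [1]"
| plus: "separable \<pi> \<Longrightarrow> separable \<sigma> \<Longrightarrow> separable (oplus \<pi> \<sigma>)"
| minus: "separable \<pi> \<Longrightarrow> separable \<sigma> \<Longrightarrow> separable (ominus \<pi> \<sigma>)"

text \<open>For [1] this is vacuous, matching the convention that 1 is irreducible.\<close>
definition irreducible_perm :: "nat list \<Rightarrow> bool" where
  "irreducible_perm \<pi> \<longleftrightarrow>
     \<not> (\<exists>i. 1 \<le> i \<and> i < length \<pi> \<and>
            (\<forall>a\<in>set (take i \<pi>). \<forall>b\<in>set (drop i \<pi>). a < b))"

definition asc :: "nat list \<Rightarrow> nat" where
  "asc \<pi> = card {i. i + 1 < length \<pi> \<and> \<pi> ! i < \<pi> ! (i + 1)}"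

definition des :: "nat list \<Rightarrow> nat" where
  "des \<pi> = card {i. i + 1 < length \<pi> \<and> \<pi> ! i > \<pi> ! (i + 1)}"

definition lmax :: "nat list \<Rightarrow> nat" where
  "lmax \<pi> = card {i. i < length \<pi> \<and> (\<forall>j<i. \<pi> ! i > \<pi> ! j)}"

definition lmin :: "nat list \<Rightarrow> nat" where
  "lmin \<pi> = card {i. i < length \<pi> \<and> (\<forall>j<i. \<pi> ! i < \<pi> ! j)}"

definition rmax :: "nat list \<Rightarrow> nat" where
  "rmax \<pi> = card {i. i < length \<pi> \<and> (\<forall>j. i < j \<and> j < length \<pi> \<longrightarrow> \<pi> ! i > \<pi> ! j)}"

definition rmin :: "nat list \<Rightarrow> nat" where
  "rmin \<pi> = card {i. i < length \<pi> \<and> (\<forall>j. i < j \<and> j < length \<pi> \<longrightarrow> \<pi> ! i < \<pi> ! j)}"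

definition perm_weight :: "'a::comm_ring_1 \<Rightarrow> 'a \<Rightarrow> 'a \<Rightarrow> 'a \<Rightarrow> 'a \<Rightarrow> 'a \<Rightarrow> nat list \<Rightarrow> 'a" where
  "perm_weight p q x y u v \<pi> =
     p ^ asc \<pi> * q ^ des \<pi> * x ^ lmax \<pi> * y ^ rmax \<pi> * u ^ lmin \<pi> * v ^ rmin \<pi>"

text \<open>Generating functions as formal power series in t (t^n marks length n),
with the remaining variables specialised to arbitrary elements of a commutative ring.\<close>
definition S_gf :: "'a::comm_ring_1 \<Rightarrow> 'a \<Rightarrow> 'a \<Rightarrow> 'a \<Rightarrow> 'a \<Rightarrow> 'a \<Rightarrow> 'a fps" where
  "S_gf p q x y u v = Abs_fps (\<lambda>n.
     \<Sum>\<pi>\<in>{\<pi>. separable \<pi> \<and> length \<pi> = n}. perm_weight p q x y u v \<pi>)"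

definition I_gf :: "'a::comm_ring_1 \<Rightarrow> 'a \<Rightarrow> 'a \<Rightarrow> 'a \<Rightarrow> 'a \<Rightarrow> 'a \<Rightarrow> 'a fps" where
  "I_gf p q x y u v = Abs_fps (\<lambda>n.
     \<Sum>\<pi>\<in>{\<pi>. separable \<pi> \<and> irreducible_perm \<pi> \<and> length \<pi> = n}. perm_weight p q x y u v \<pi>)"

end

theory Submission
  imports Defs
begin

text \<open>
A separable permutation that is not irreducible is a direct sum \<open>\<alpha> \<oplus> \<beta>\<close>. Splitting at
the first split point makes \<open>\<alpha>\<close> irreducible, splitting at the last one makes \<open>\<beta>\<close>
irreducible, and in either case the decomposition is unique; existence follows by induction
on separability, since a skew sum \<open>\<alpha> \<ominus> \<beta>\<close> is always irreducible. Passing from \<open>\<alpha>\<close> and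
\<open>\<beta>\<close> to \<open>\<alpha> \<oplus> \<beta>\<close>, ascents add up with one extra ascent at the junction, descents,
left-to-right maxima and right-to-left minima add up, left-to-right minima all lie in \<open>\<alpha>\<close>
and right-to-left maxima all lie in \<open>\<beta>\<close>. So the weight of \<open>\<alpha> \<oplus> \<beta>\<close> is \<open>p\<close> times the
weight of \<open>\<alpha>\<close> at \<open>y = 1\<close> times the weight of \<open>\<beta>\<close> at \<open>u = 1\<close>, and summing over the two
bijections gives the two factorisations.
\<close>

lemma card_positions_append:
  "card {i. i < length (xs @ ys) \<and> P (take i (xs @ ys)) ((xs @ ys) ! i) (drop (Suc i) (xs @ ys))}
     = card {i. i < length xs \<and> P (take i xs) (xs ! i) (drop (Suc i) xs @ ys)}
     + card {k. k < length ys \<and> P (xs @ take k ys) (ys ! k) (drop (Suc k) ys)}"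
  (is "card ?AB = card ?A + card ?B")
proof -
  have "?AB = ?A \<union> (\<lambda>k. length xs + k) ` ?B"
  proof (intro set_eqI iffI)
    fix i assume "i \<in> ?AB"
    then show "i \<in> ?A \<union> (\<lambda>k. length xs + k) ` ?B"
      by (cases "i < length xs")
         (auto simp: nth_append image_iff Suc_diff_le intro!: exI[of _ "i - length xs"])
  qed (auto simp: nth_append)
  moreover have "card (?A \<union> (\<lambda>k. length xs + k) ` ?B) = card ?A + card ?B"
    by (subst card_Un_disjoint) (auto simp: card_image)
  ultimately show ?thesis by simp
qed

lemma set_take_conv_nth: "i \<le> length xs \<Longrightarrow> set (take i xs) = (!) xs ` {..<i}"
  by (simp add: nth_image atLeast0LessThan[symmetric])

lemma set_drop_conv_nth: "set (drop i xs) = (!) xs ` {i..<length xs}"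
proof (intro set_eqI iffI)
  fix a assume "a \<in> (!) xs ` {i..<length xs}"
  then obtain j where "i \<le> j" "j < length xs" "a = xs ! j" by auto
  then show "a \<in> set (drop i xs)"
    by (auto simp: in_set_conv_nth intro!: exI[of _ "j - i"])
qed (auto simp: in_set_conv_nth)

text \<open>
Each statistic counts the positions satisfying a condition on the prefix before, the entry
at, and the suffix after the position; this makes its behaviour under concatenation uniform.
\<close>

lemma lmax_conv_take: "lmax \<pi> = card {i. i < length \<pi> \<and> (\<forall>a\<in>set (take i \<pi>). a < \<pi> ! i)}"
  unfolding lmax_def by (rule arg_cong[where f = card]) (auto simp: set_take_conv_nth)

lemma lmin_conv_take: "lmin \<pi> = card {i. i < length \<pi> \<and> (\<forall>a\<in>set (take i \<pi>). \<pi> ! i < a)}"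
  unfolding lmin_def by (rule arg_cong[where f = card]) (auto simp: set_take_conv_nth)

lemma rmax_conv_drop: "rmax \<pi> = card {i. i < length \<pi> \<and> (\<forall>b\<in>set (drop (Suc i) \<pi>). b < \<pi> ! i)}"
  unfolding rmax_def set_drop_conv_nth by (rule arg_cong[where f = card]) auto

lemma rmin_conv_drop: "rmin \<pi> = card {i. i < length \<pi> \<and> (\<forall>b\<in>set (drop (Suc i) \<pi>). \<pi> ! i < b)}"
  unfolding rmin_def set_drop_conv_nth by (rule arg_cong[where f = card]) auto

lemma asc_conv_drop:
  "asc \<pi> = card {i. i < length \<pi> \<and> (drop (Suc i) \<pi> \<noteq> [] \<and> \<pi> ! i < hd (drop (Suc i) \<pi>))}"
  unfolding asc_def by (rule arg_cong[where f = card]) (auto simp: hd_drop_conv_nth)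

lemma des_conv_drop:
  "des \<pi> = card {i. i < length \<pi> \<and> (drop (Suc i) \<pi> \<noteq> [] \<and> hd (drop (Suc i) \<pi>) < \<pi> ! i)}"
  unfolding des_def by (rule arg_cong[where f = card]) (auto simp: hd_drop_conv_nth)

context
  fixes A B :: "nat list"
  assumes A_ne: "A \<noteq> []" and B_ne: "B \<noteq> []" and A_less_B: "\<forall>a\<in>set A. \<forall>b\<in>set B. a < b"
begin

lemma lmax_append_less: "lmax (A @ B) = lmax A + lmax B"
proof -
  have "{k. k < length B \<and> (\<forall>a\<in>set (A @ take k B). a < B ! k)}
      = {k. k < length B \<and> (\<forall>a\<in>set (take k B). a < B ! k)}"
    using A_less_B by (auto simp: nth_mem)
  then show ?thesis
    using card_positions_append[where P = "\<lambda>pre e suf. \<forall>a\<in>set pre. a < e" and xs = A and ys = B]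
    by (simp only: lmax_conv_take)
qed

lemma lmin_append_less: "lmin (A @ B) = lmin A"
proof -
  have "\<exists>a\<in>set (A @ take k B). \<not> B ! k < a" if "k < length B" for k
    using A_ne A_less_B that by (intro bexI[of _ "hd A"]) (auto simp: less_not_sym nth_mem)
  then have "{k. k < length B \<and> (\<forall>a\<in>set (A @ take k B). B ! k < a)} = {}"
    by auto
  then show ?thesis
    using card_positions_append[where P = "\<lambda>pre e suf. \<forall>a\<in>set pre. e < a" and xs = A and ys = B]
    by (simp only: lmin_conv_take card.empty add_0_right)
qed

lemma rmax_append_less: "rmax (A @ B) = rmax B"
proof -
  have "\<exists>b\<in>set (drop (Suc i) A @ B). \<not> b < A ! i" if "i < length A" for i
    using B_ne A_less_B that by (intro bexI[of _ "hd B"]) (auto simp: less_not_sym nth_mem)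
  then have "{i. i < length A \<and> (\<forall>b\<in>set (drop (Suc i) A @ B). b < A ! i)} = {}"
    by auto
  then show ?thesis
    using card_positions_append[where P = "\<lambda>pre e suf. \<forall>b\<in>set suf. b < e" and xs = A and ys = B]
    by (simp only: rmax_conv_drop card.empty add_0)
qed

lemma rmin_append_less: "rmin (A @ B) = rmin A + rmin B"
proof -
  have "{i. i < length A \<and> (\<forall>b\<in>set (drop (Suc i) A @ B). A ! i < b)}
      = {i. i < length A \<and> (\<forall>b\<in>set (drop (Suc i) A). A ! i < b)}"
    using A_less_B by (auto simp: nth_mem)
  then show ?thesis
    using card_positions_append[where P = "\<lambda>pre e suf. \<forall>b\<in>set suf. e < b" and xs = A and ys = B]
    by (simp only: rmin_conv_drop)
qed

lemma asc_append_less: "asc (A @ B) = asc A + asc B + 1"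
proof -
  let ?asc_A = "{i. i < length A \<and> (drop (Suc i) A \<noteq> [] \<and> A ! i < hd (drop (Suc i) A))}"
  have "(drop (Suc i) A @ B \<noteq> [] \<and> A ! i < hd (drop (Suc i) A @ B))
      \<longleftrightarrow> i = length A - 1 \<or> (drop (Suc i) A \<noteq> [] \<and> A ! i < hd (drop (Suc i) A))"
    if "i < length A" for i
  proof (cases "Suc i < length A")
    case False
    then have "i = length A - 1" "drop (Suc i) A = []" using that by auto
    then show ?thesis using A_less_B B_ne that by (simp add: nth_mem)
  qed auto
  moreover have "length A - 1 < length A"
    using A_ne by simp
  ultimately have "{i. i < length A \<and> (drop (Suc i) A @ B \<noteq> [] \<and> A ! i < hd (drop (Suc i) A @ B))}
      = insert (length A - 1) ?asc_A"
    by blast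
  moreover have "card (insert (length A - 1) ?asc_A) = card ?asc_A + 1"
    by (subst card_insert_disjoint) (auto intro: finite_subset[of _ "{..<length A}"])
  ultimately show ?thesis
    using card_positions_append[where P = "\<lambda>pre e suf. suf \<noteq> [] \<and> e < hd suf" and xs = A and ys = B]
    by (simp only: asc_conv_drop)
qed

lemma des_append_less: "des (A @ B) = des A + des B"
proof -
  have "(drop (Suc i) A @ B \<noteq> [] \<and> hd (drop (Suc i) A @ B) < A ! i)
      \<longleftrightarrow> (drop (Suc i) A \<noteq> [] \<and> hd (drop (Suc i) A) < A ! i)"
    if "i < length A" for i
  proof (cases "Suc i < length A")
    case False
    then have "drop (Suc i) A = []" by simp
    then show ?thesis using A_less_B B_ne that by (simp add: less_not_sym nth_mem)
  qed simp
  then have "{i. i < length A \<and> (drop (Suc i) A @ B \<noteq> [] \<and> hd (drop (Suc i) A @ B) < A ! i)}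
      = {i. i < length A \<and> (drop (Suc i) A \<noteq> [] \<and> hd (drop (Suc i) A) < A ! i)}"
    by auto
  then show ?thesis
    using card_positions_append[where P = "\<lambda>pre e suf. suf \<noteq> [] \<and> hd suf < e" and xs = A and ys = B]
    by (simp only: des_conv_drop)
qed

end

lemma stats_shift:
  fixes c :: nat
  shows "asc (map (\<lambda>s. s + c) \<pi>) = asc \<pi>" "des (map (\<lambda>s. s + c) \<pi>) = des \<pi>"
    "lmax (map (\<lambda>s. s + c) \<pi>) = lmax \<pi>" "lmin (map (\<lambda>s. s + c) \<pi>) = lmin \<pi>"
    "rmax (map (\<lambda>s. s + c) \<pi>) = rmax \<pi>" "rmin (map (\<lambda>s. s + c) \<pi>) = rmin \<pi>"
  unfolding asc_def des_def lmax_def lmin_def rmax_def rmin_def by (auto intro!: arg_cong[where f = card])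

lemma separable_nonempty: "separable \<pi> \<Longrightarrow> \<pi> \<noteq> []"
  by (induction rule: separable.induct) (auto simp: oplus_def ominus_def)

lemma separable_set: "separable \<pi> \<Longrightarrow> set \<pi> \<subseteq> {1..length \<pi>}"
  by (induction rule: separable.induct) (fastforce simp: oplus_def ominus_def)+

lemma finite_separable_length: "finite {\<pi>. separable \<pi> \<and> length \<pi> = n}"
  by (rule finite_subset[OF _ finite_lists_length_eq[of "{1..n}" n]])
     (use separable_set in auto)

lemma length_oplus [simp]: "length (oplus \<alpha> \<beta>) = length \<alpha> + length \<beta>"
  by (simp add: oplus_def)

lemma oplus_assoc: "oplus (oplus \<alpha> \<beta>) \<gamma> = oplus \<alpha> (oplus \<beta> \<gamma>)"
  by (simp add: oplus_def add.assoc)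

lemma oplus_less:
  assumes "separable \<alpha>" "separable \<beta>"
  shows "\<forall>a\<in>set \<alpha>. \<forall>b\<in>set (map (\<lambda>s. s + length \<alpha>) \<beta>). a < b"
  using separable_set[OF assms(1)] separable_set[OF assms(2)] by fastforce

lemma perm_weight_oplus:
  assumes "separable \<alpha>" "separable \<beta>"
  shows "perm_weight p q x y u v (oplus \<alpha> \<beta>) = p * perm_weight p q x 1 u v \<alpha> * perm_weight p q x y 1 v \<beta>"
proof -
  let ?\<beta>' = "map (\<lambda>s. s + length \<alpha>) \<beta>"
  have ne: "\<alpha> \<noteq> []" "?\<beta>' \<noteq> []"
    using assms by (simp_all add: separable_nonempty)
  note less = oplus_less[OF assms]
  note stats = asc_append_less[OF ne less] des_append_less[OF ne less] lmax_append_less[OF ne less]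
    lmin_append_less[OF ne less] rmax_append_less[OF ne less] rmin_append_less[OF ne less]
  show ?thesis
    unfolding perm_weight_def oplus_def stats stats_shift by (simp add: power_add mult_ac)
qed

definition splits_at :: "nat list \<Rightarrow> nat \<Rightarrow> bool" where
  "splits_at \<pi> i \<longleftrightarrow> 1 \<le> i \<and> i < length \<pi> \<and> (\<forall>a\<in>set (take i \<pi>). \<forall>b\<in>set (drop i \<pi>). a < b)"

lemma irreducible_perm_iff_no_split: "irreducible_perm \<pi> \<longleftrightarrow> (\<nexists>i. splits_at \<pi> i)"
  by (simp add: irreducible_perm_def splits_at_def)

lemma splits_at_append_left: "splits_at (xs @ ys) i \<Longrightarrow> i < length xs \<Longrightarrow> splits_at xs i"
  by (auto simp: splits_at_def)

lemma splits_at_append_right: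
  "splits_at (xs @ ys) i \<Longrightarrow> length xs < i \<Longrightarrow> splits_at ys (i - length xs)"
  by (auto simp: splits_at_def)

lemma splits_at_shift: "splits_at (map (\<lambda>s. s + c) \<pi>) i \<longleftrightarrow> splits_at \<pi> i"
  by (auto simp: splits_at_def take_map drop_map)

lemma splits_at_oplus:
  assumes "separable \<alpha>" "separable \<beta>"
  shows "splits_at (oplus \<alpha> \<beta>) (length \<alpha>)"
  using oplus_less[OF assms] separable_nonempty[OF assms(1)] separable_nonempty[OF assms(2)]
  by (auto simp: splits_at_def oplus_def Suc_le_eq)

lemma oplus_not_irreducible: "separable \<alpha> \<Longrightarrow> separable \<beta> \<Longrightarrow> \<not> irreducible_perm (oplus \<alpha> \<beta>)"
  using splits_at_oplus irreducible_perm_iff_no_split by blast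

lemma ominus_irreducible:
  assumes "separable \<alpha>" "separable \<beta>"
  shows "irreducible_perm (ominus \<alpha> \<beta>)"
  unfolding irreducible_perm_iff_no_split
proof
  assume "\<exists>i. splits_at (ominus \<alpha> \<beta>) i"
  then obtain i where i: "splits_at (ominus \<alpha> \<beta>) i" ..
  let ?\<pi> = "ominus \<alpha> \<beta>"
  have "take i ?\<pi> \<noteq> []" "drop i ?\<pi> \<noteq> []"
    using i by (auto simp: splits_at_def)
  then have "hd (take i ?\<pi>) \<in> set (take i ?\<pi>)" "last (drop i ?\<pi>) \<in> set (drop i ?\<pi>)"
    by (blast intro: hd_in_set last_in_set)+
  then have "hd ?\<pi> < last ?\<pi>"
    using i by (auto simp: splits_at_def hd_take last_drop)
  then have "hd \<alpha> + length \<beta> < last \<beta>"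
    using separable_nonempty[OF assms(1)] separable_nonempty[OF assms(2)]
    by (simp add: ominus_def hd_map)
  moreover have "hd \<alpha> \<in> {1..length \<alpha>}" "last \<beta> \<in> {1..length \<beta>}"
    using separable_set[OF assms(1)] separable_set[OF assms(2)]
      separable_nonempty[OF assms(1)] separable_nonempty[OF assms(2)] by (auto dest: hd_in_set last_in_set)
  ultimately show False by simp
qed

lemma oplus_eq_oplus_same_length:
  "length \<alpha> = length \<alpha>' \<Longrightarrow> oplus \<alpha> \<beta> = oplus \<alpha>' \<beta>' \<longleftrightarrow> \<alpha> = \<alpha>' \<and> \<beta> = \<beta>'"
  by (auto simp: oplus_def)

lemma separable_irreducible_or_oplus_left:
  "separable \<pi> \<Longrightarrow>
     irreducible_perm \<pi> \<or> (\<exists>\<alpha> \<beta>. separable \<alpha> \<and> irreducible_perm \<alpha> \<and> separable \<beta> \<and> \<pi> = oplus \<alpha> \<beta>)"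
proof (induction rule: separable.induct)
  case one
  then show ?case by (simp add: irreducible_perm_def)
next
  case (plus a b)
  from plus.IH(1) show ?case
  proof
    assume "irreducible_perm a"
    then show ?case using plus.hyps by blast
  next
    assume "\<exists>\<alpha> \<beta>. separable \<alpha> \<and> irreducible_perm \<alpha> \<and> separable \<beta> \<and> a = oplus \<alpha> \<beta>"
    then obtain \<alpha> \<beta> where "separable \<alpha>" "irreducible_perm \<alpha>" "separable \<beta>" "a = oplus \<alpha> \<beta>"
      by blast
    then show ?case
      using plus.hyps(2) by (metis oplus_assoc separable.plus)
  qed
next
  case (minus a b)
  then show ?case by (simp add: ominus_irreducible)
qed

lemma separable_irreducible_or_oplus_right:
  "separable \<pi> \<Longrightarrow>
     irreducible_perm \<pi> \<or> (\<exists>\<alpha> \<beta>. separable \<alpha> \<and> separable \<beta> \<and> irreducible_perm \<beta> \<and> \<pi> = oplus \<alpha> \<beta>)"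
proof (induction rule: separable.induct)
  case one
  then show ?case by (simp add: irreducible_perm_def)
next
  case (plus a b)
  from plus.IH(2) show ?case
  proof
    assume "irreducible_perm b"
    then show ?case using plus.hyps by blast
  next
    assume "\<exists>\<alpha> \<beta>. separable \<alpha> \<and> separable \<beta> \<and> irreducible_perm \<beta> \<and> b = oplus \<alpha> \<beta>"
    then obtain \<alpha> \<beta> where "separable \<alpha>" "separable \<beta>" "irreducible_perm \<beta>" "b = oplus \<alpha> \<beta>"
      by blast
    then show ?case
      using plus.hyps(1) by (metis oplus_assoc separable.plus)
  qed
next
  case (minus a b)
  then show ?case by (simp add: ominus_irreducible)
qed

lemma oplus_irreducible_left_unique:
  assumes "separable \<alpha>" "separable \<beta>" "separable \<alpha>'" "separable \<beta>'"
    and "irreducible_perm \<alpha>" "irreducible_perm \<alpha>'" and "oplus \<alpha> \<beta> = oplus \<alpha>' \<beta>'"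
  shows "\<alpha> = \<alpha>' \<and> \<beta> = \<beta>'"
proof -
  have not_shorter: "\<not> length \<alpha>\<^sub>1 < length \<alpha>\<^sub>2"
    if "separable \<alpha>\<^sub>1" "separable \<beta>\<^sub>1" "irreducible_perm \<alpha>\<^sub>2" "oplus \<alpha>\<^sub>1 \<beta>\<^sub>1 = oplus \<alpha>\<^sub>2 \<beta>\<^sub>2"
    for \<alpha>\<^sub>1 \<beta>\<^sub>1 \<alpha>\<^sub>2 \<beta>\<^sub>2
  proof
    assume "length \<alpha>\<^sub>1 < length \<alpha>\<^sub>2"
    moreover have "splits_at (\<alpha>\<^sub>2 @ map (\<lambda>s. s + length \<alpha>\<^sub>2) \<beta>\<^sub>2) (length \<alpha>\<^sub>1)"
      using splits_at_oplus[OF that(1,2)] that(4) by (simp add: oplus_def)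
    ultimately have "splits_at \<alpha>\<^sub>2 (length \<alpha>\<^sub>1)"
      using splits_at_append_left by blast
    then show False
      using that(3) irreducible_perm_iff_no_split by blast
  qed
  have "length \<alpha> = length \<alpha>'"
    using not_shorter[OF assms(1,2,6,7)] not_shorter[OF assms(3,4,5) assms(7)[symmetric]] by linarith
  then show ?thesis
    using assms(7) oplus_eq_oplus_same_length by blast
qed

lemma oplus_irreducible_right_unique:
  assumes "separable \<alpha>" "separable \<beta>" "separable \<alpha>'" "separable \<beta>'"
    and "irreducible_perm \<beta>" "irreducible_perm \<beta>'" and "oplus \<alpha> \<beta> = oplus \<alpha>' \<beta>'"
  shows "\<alpha> = \<alpha>' \<and> \<beta> = \<beta>'"
proof -
  have not_shorter: "\<not> length \<alpha>\<^sub>1 < length \<alpha>\<^sub>2"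
    if "separable \<alpha>\<^sub>2" "separable \<beta>\<^sub>2" "irreducible_perm \<beta>\<^sub>1" "oplus \<alpha>\<^sub>1 \<beta>\<^sub>1 = oplus \<alpha>\<^sub>2 \<beta>\<^sub>2"
    for \<alpha>\<^sub>1 \<beta>\<^sub>1 \<alpha>\<^sub>2 \<beta>\<^sub>2
  proof
    assume "length \<alpha>\<^sub>1 < length \<alpha>\<^sub>2"
    moreover have "splits_at (\<alpha>\<^sub>1 @ map (\<lambda>s. s + length \<alpha>\<^sub>1) \<beta>\<^sub>1) (length \<alpha>\<^sub>2)"
      using splits_at_oplus[OF that(1,2)] that(4) by (simp add: oplus_def)
    ultimately have "splits_at \<beta>\<^sub>1 (length \<alpha>\<^sub>2 - length \<alpha>\<^sub>1)"
      using splits_at_append_right splits_at_shift by fastforce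
    then show False
      using that(3) irreducible_perm_iff_no_split by blast
  qed
  have "length \<alpha> = length \<alpha>'"
    using not_shorter[OF assms(3,4,5,7)] not_shorter[OF assms(1,2,6) assms(7)[symmetric]] by linarith
  then show ?thesis
    using assms(7) oplus_eq_oplus_same_length by blast
qed

lemma bij_betw_oplus_irreducible_left:
  "bij_betw (\<lambda>(\<alpha>, \<beta>). oplus \<alpha> \<beta>) {(\<alpha>, \<beta>). (separable \<alpha> \<and> irreducible_perm \<alpha>) \<and> separable \<beta>}
     {\<pi>. separable \<pi> \<and> \<not> irreducible_perm \<pi>}"
  unfolding bij_betw_def
proof
  show "inj_on (\<lambda>(\<alpha>, \<beta>). oplus \<alpha> \<beta>) {(\<alpha>, \<beta>). (separable \<alpha> \<and> irreducible_perm \<alpha>) \<and> separable \<beta>}"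
  proof (rule inj_onI, clarify)
    fix \<alpha> \<beta> \<alpha>' \<beta>'
    assume "separable \<alpha>" "separable \<beta>" "separable \<alpha>'" "separable \<beta>'"
      "irreducible_perm \<alpha>" "irreducible_perm \<alpha>'"
      and "oplus \<alpha> \<beta> = oplus \<alpha>' \<beta>'"
    then show "\<alpha> = \<alpha>' \<and> \<beta> = \<beta>'"
      by (rule oplus_irreducible_left_unique)
  qed
  show "(\<lambda>(\<alpha>, \<beta>). oplus \<alpha> \<beta>) ` {(\<alpha>, \<beta>). (separable \<alpha> \<and> irreducible_perm \<alpha>) \<and> separable \<beta>}
      = {\<pi>. separable \<pi> \<and> \<not> irreducible_perm \<pi>}"
  proof (intro equalityI subsetI)
    fix \<pi> assume "\<pi> \<in> (\<lambda>(\<alpha>, \<beta>). oplus \<alpha> \<beta>) ` {(\<alpha>, \<beta>). (separable \<alpha> \<and> irreducible_perm \<alpha>) \<and> separable \<beta>}"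
    then show "\<pi> \<in> {\<pi>. separable \<pi> \<and> \<not> irreducible_perm \<pi>}"
      by (auto simp: separable.plus oplus_not_irreducible)
  next
    fix \<pi> assume "\<pi> \<in> {\<pi>. separable \<pi> \<and> \<not> irreducible_perm \<pi>}"
    then obtain \<alpha> \<beta> where "(separable \<alpha> \<and> irreducible_perm \<alpha>) \<and> separable \<beta>" "\<pi> = oplus \<alpha> \<beta>"
      using separable_irreducible_or_oplus_left by blast
    then show "\<pi> \<in> (\<lambda>(\<alpha>, \<beta>). oplus \<alpha> \<beta>) ` {(\<alpha>, \<beta>). (separable \<alpha> \<and> irreducible_perm \<alpha>) \<and> separable \<beta>}"
      by (intro image_eqI[of _ _ "(\<alpha>, \<beta>)"]) auto
  qed
qed

lemma bij_betw_oplus_irreducible_right: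
  "bij_betw (\<lambda>(\<alpha>, \<beta>). oplus \<alpha> \<beta>) {(\<alpha>, \<beta>). separable \<alpha> \<and> (separable \<beta> \<and> irreducible_perm \<beta>)}
     {\<pi>. separable \<pi> \<and> \<not> irreducible_perm \<pi>}"
  unfolding bij_betw_def
proof
  show "inj_on (\<lambda>(\<alpha>, \<beta>). oplus \<alpha> \<beta>) {(\<alpha>, \<beta>). separable \<alpha> \<and> (separable \<beta> \<and> irreducible_perm \<beta>)}"
  proof (rule inj_onI, clarify)
    fix \<alpha> \<beta> \<alpha>' \<beta>'
    assume "separable \<alpha>" "separable \<beta>" "separable \<alpha>'" "separable \<beta>'"
      "irreducible_perm \<beta>" "irreducible_perm \<beta>'"
      and "oplus \<alpha> \<beta> = oplus \<alpha>' \<beta>'"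
    then show "\<alpha> = \<alpha>' \<and> \<beta> = \<beta>'"
      by (rule oplus_irreducible_right_unique)
  qed
  show "(\<lambda>(\<alpha>, \<beta>). oplus \<alpha> \<beta>) ` {(\<alpha>, \<beta>). separable \<alpha> \<and> (separable \<beta> \<and> irreducible_perm \<beta>)}
      = {\<pi>. separable \<pi> \<and> \<not> irreducible_perm \<pi>}"
  proof (intro equalityI subsetI)
    fix \<pi> assume "\<pi> \<in> (\<lambda>(\<alpha>, \<beta>). oplus \<alpha> \<beta>) ` {(\<alpha>, \<beta>). separable \<alpha> \<and> (separable \<beta> \<and> irreducible_perm \<beta>)}"
    then show "\<pi> \<in> {\<pi>. separable \<pi> \<and> \<not> irreducible_perm \<pi>}"
      by (auto simp: separable.plus oplus_not_irreducible)
  next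
    fix \<pi> assume "\<pi> \<in> {\<pi>. separable \<pi> \<and> \<not> irreducible_perm \<pi>}"
    then obtain \<alpha> \<beta> where "separable \<alpha> \<and> (separable \<beta> \<and> irreducible_perm \<beta>)" "\<pi> = oplus \<alpha> \<beta>"
      using separable_irreducible_or_oplus_right by blast
    then show "\<pi> \<in> (\<lambda>(\<alpha>, \<beta>). oplus \<alpha> \<beta>) ` {(\<alpha>, \<beta>). separable \<alpha> \<and> (separable \<beta> \<and> irreducible_perm \<beta>)}"
      by (intro image_eqI[of _ _ "(\<alpha>, \<beta>)"]) auto
  qed
qed

definition length_gf :: "('b list \<Rightarrow> bool) \<Rightarrow> ('b list \<Rightarrow> 'a::comm_ring_1) \<Rightarrow> 'a fps" where
  "length_gf P f = Abs_fps (\<lambda>n. \<Sum>\<pi>\<in>{\<pi>. P \<pi> \<and> length \<pi> = n}. f \<pi>)"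

lemma S_gf_eq_length_gf: "S_gf p q x y u v = length_gf separable (perm_weight p q x y u v)"
  by (simp add: S_gf_def length_gf_def)

lemma I_gf_eq_length_gf:
  "I_gf p q x y u v = length_gf (\<lambda>\<pi>. separable \<pi> \<and> irreducible_perm \<pi>) (perm_weight p q x y u v)"
  by (simp add: I_gf_def length_gf_def conj_assoc)

lemma length_gf_diff:
  assumes "\<And>n. finite {\<pi>. P \<pi> \<and> length \<pi> = n}"
  shows "length_gf P f - length_gf (\<lambda>\<pi>. P \<pi> \<and> Q \<pi>) f = length_gf (\<lambda>\<pi>. P \<pi> \<and> \<not> Q \<pi>) f"
proof (rule fps_ext)
  fix n
  have split: "{\<pi>. P \<pi> \<and> length \<pi> = n}
      = {\<pi>. (P \<pi> \<and> Q \<pi>) \<and> length \<pi> = n} \<union> {\<pi>. (P \<pi> \<and> \<not> Q \<pi>) \<and> length \<pi> = n}"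
    by auto
  have "sum f {\<pi>. P \<pi> \<and> length \<pi> = n}
      = sum f {\<pi>. (P \<pi> \<and> Q \<pi>) \<and> length \<pi> = n} + sum f {\<pi>. (P \<pi> \<and> \<not> Q \<pi>) \<and> length \<pi> = n}"
    unfolding split by (rule sum.union_disjoint) (auto intro: finite_subset[OF _ assms])
  then show "fps_nth (length_gf P f - length_gf (\<lambda>\<pi>. P \<pi> \<and> Q \<pi>) f) n = fps_nth (length_gf (\<lambda>\<pi>. P \<pi> \<and> \<not> Q \<pi>) f) n"
    by (simp add: length_gf_def)
qed

lemma length_gf_mult_nth:
  assumes "\<And>n. finite {\<alpha>. P \<alpha> \<and> length \<alpha> = n}" and "\<And>n. finite {\<beta>. Q \<beta> \<and> length \<beta> = n}"
  shows "fps_nth (length_gf P f * length_gf Q g) n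
    = (\<Sum>(\<alpha>, \<beta>)\<in>{(\<alpha>, \<beta>). P \<alpha> \<and> Q \<beta> \<and> length \<alpha> + length \<beta> = n}. f \<alpha> * g \<beta>)"
proof -
  let ?P = "\<lambda>i. {\<alpha>. P \<alpha> \<and> length \<alpha> = i}" and ?Q = "\<lambda>i. {\<beta>. Q \<beta> \<and> length \<beta> = i}"
  have "fps_nth (length_gf P f * length_gf Q g) n = (\<Sum>i=0..n. (\<Sum>\<alpha>\<in>?P i. f \<alpha>) * (\<Sum>\<beta>\<in>?Q (n - i). g \<beta>))"
    by (simp add: length_gf_def fps_mult_nth)
  also have "\<dots> = (\<Sum>i=0..n. \<Sum>(\<alpha>, \<beta>)\<in>?P i \<times> ?Q (n - i). f \<alpha> * g \<beta>)"
    by (simp add: sum_product sum.cartesian_product)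
  also have "\<dots> = (\<Sum>(\<alpha>, \<beta>)\<in>(\<Union>i\<in>{0..n}. ?P i \<times> ?Q (n - i)). f \<alpha> * g \<beta>)"
    by (rule sum.UNION_disjoint[symmetric]) (use assms in auto)
  also have "(\<Union>i\<in>{0..n}. ?P i \<times> ?Q (n - i)) = {(\<alpha>, \<beta>). P \<alpha> \<and> Q \<beta> \<and> length \<alpha> + length \<beta> = n}"
    by auto
  finally show ?thesis .
qed

lemma length_gf_eq_mult:
  assumes fin_P: "\<And>n. finite {\<alpha>. P \<alpha> \<and> length \<alpha> = n}" and fin_Q: "\<And>n. finite {\<beta>. Q \<beta> \<and> length \<beta> = n}"
    and bij: "bij_betw (\<lambda>(\<alpha>, \<beta>). h \<alpha> \<beta>) {(\<alpha>, \<beta>). P \<alpha> \<and> Q \<beta>} {\<pi>. R \<pi>}"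
    and length_h: "\<And>\<alpha> \<beta>. length (h \<alpha> \<beta>) = length \<alpha> + length \<beta>"
    and weight_h: "\<And>\<alpha> \<beta>. P \<alpha> \<Longrightarrow> Q \<beta> \<Longrightarrow> w (h \<alpha> \<beta>) = c * f \<alpha> * g \<beta>"
  shows "length_gf R w = fps_const c * length_gf P f * length_gf Q g"
proof (rule fps_ext)
  fix n
  let ?pairs = "{(\<alpha>, \<beta>). P \<alpha> \<and> Q \<beta> \<and> length \<alpha> + length \<beta> = n}"
  have bij_n: "bij_betw (\<lambda>(\<alpha>, \<beta>). h \<alpha> \<beta>) ?pairs {\<pi>. R \<pi> \<and> length \<pi> = n}"
  proof (rule bij_betw_subset[OF bij])
    show "(\<lambda>(\<alpha>, \<beta>). h \<alpha> \<beta>) ` ?pairs = {\<pi>. R \<pi> \<and> length \<pi> = n}"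
    proof (intro equalityI subsetI)
      fix \<pi> assume \<pi>: "\<pi> \<in> {\<pi>. R \<pi> \<and> length \<pi> = n}"
      then have "\<pi> \<in> (\<lambda>(\<alpha>, \<beta>). h \<alpha> \<beta>) ` {(\<alpha>, \<beta>). P \<alpha> \<and> Q \<beta>}"
        using bij_betw_imp_surj_on[OF bij] by blast
      then obtain \<alpha> \<beta> where "P \<alpha>" "Q \<beta>" "\<pi> = h \<alpha> \<beta>"
        by auto
      with \<pi> show "\<pi> \<in> (\<lambda>(\<alpha>, \<beta>). h \<alpha> \<beta>) ` ?pairs"
        by (intro image_eqI[of _ _ "(\<alpha>, \<beta>)"]) (auto simp: length_h)
    qed (use bij_betw_imp_surj_on[OF bij] length_h in auto)
  qed auto
  have "fps_nth (fps_const c * length_gf P f * length_gf Q g) n = c * (\<Sum>(\<alpha>, \<beta>)\<in>?pairs. f \<alpha> * g \<beta>)"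
    by (simp add: mult.assoc length_gf_mult_nth[OF fin_P fin_Q])
  also have "\<dots> = (\<Sum>(\<alpha>, \<beta>)\<in>?pairs. w (h \<alpha> \<beta>))"
    by (auto simp: sum_distrib_left weight_h mult.assoc intro!: sum.cong)
  also have "\<dots> = fps_nth (length_gf R w) n"
    using sum.reindex_bij_betw[OF bij_n, of w] by (simp add: length_gf_def case_prod_unfold)
  finally show "fps_nth (length_gf R w) n = fps_nth (fps_const c * length_gf P f * length_gf Q g) n" ..
qed

theorem theorem10:
  fixes p q x y u v :: "'a::comm_ring_1"
  shows "S_gf p q x y u v - I_gf p q x y u v
           = fps_const p * I_gf p q x 1 u v * S_gf p q x y 1 v
      \<and> S_gf p q x y u v - I_gf p q x y u v
           = fps_const p * I_gf p q x y 1 v * S_gf p q x 1 u v"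
proof -
  have fin_S: "\<And>n. finite {\<pi>. separable \<pi> \<and> length \<pi> = n}"
    by (rule finite_separable_length)
  have fin_I: "\<And>n. finite {\<pi>. (separable \<pi> \<and> irreducible_perm \<pi>) \<and> length \<pi> = n}"
    by (rule finite_subset[OF _ finite_separable_length]) auto
  have reducible: "S_gf p q x y u v - I_gf p q x y u v
      = length_gf (\<lambda>\<pi>. separable \<pi> \<and> \<not> irreducible_perm \<pi>) (perm_weight p q x y u v)"
    unfolding S_gf_eq_length_gf I_gf_eq_length_gf by (rule length_gf_diff[OF fin_S])
  have first_irreducible: "length_gf (\<lambda>\<pi>. separable \<pi> \<and> \<not> irreducible_perm \<pi>) (perm_weight p q x y u v)
      = fps_const p * I_gf p q x 1 u v * S_gf p q x y 1 v"
    unfolding S_gf_eq_length_gf I_gf_eq_length_gf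
    by (rule length_gf_eq_mult[OF fin_I fin_S bij_betw_oplus_irreducible_left length_oplus])
       (simp add: perm_weight_oplus)
  have last_irreducible: "length_gf (\<lambda>\<pi>. separable \<pi> \<and> \<not> irreducible_perm \<pi>) (perm_weight p q x y u v)
      = fps_const p * S_gf p q x 1 u v * I_gf p q x y 1 v"
    unfolding S_gf_eq_length_gf I_gf_eq_length_gf
    by (rule length_gf_eq_mult[OF fin_S fin_I bij_betw_oplus_irreducible_right length_oplus])
       (simp add: perm_weight_oplus)
  show ?thesis
    using reducible first_irreducible last_irreducible by (simp add: mult_ac)
qed

end
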